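(* Let $\mathcal{M}$ be a separable metric space, let $f:\mathcal{M}\to\mathcal{M}$ be a continuous bijection with continuous inverse, and let $\mathcal{X}\subseteq\mathcal{M}$ be forward invariant under $f$ and path connected. Consider $x_{k+1}=f(x_k)$ on $\mathcal{X}$ with set of $\omega$-limit sets $\mathcal{W}$ and set of $\alpha$-limit sets $\mathcal{A}$. Suppose: (T1) there exist a separable metric space $\mathcal{Z}$, a continuous bijection $g:\mathcal{Z}\to\mathcal{Z}$ with continuous inverse, and a continuous map $F:\mathcal{X}\to\mathcal{Z}$ with $F\circ f=g\circ F$ on $\mathcal{X}$, such that $z_{k+1}=g(z_k)$ and $z_{k+1}=g^{-1}(z_k)$ on $\mathcal{Z}$ both have closed basins; (T2) every trajectory in $\mathcal{X}$ is forward precompact or backward precompact in $\mathcal{X}$; (T3) $\mathcal{W}\cup\mathcal{A}$ is countable. Let $\widehat{\mathcal{W}}$ be the set of $\Omega\in\mathcal{W}$ such that $D^+_{\mathcal{X}}(\Omega)$ contains a point whose trajectory is forward precompact in $\mathcal{X}$, and let $\widehat{\mathcal{A}}$ be the set of $\Gamma\in\mathcal{A}$ such that $D^-_{\mathcal{X}}(\Gamma)$ contains a point whose trajectory is backward precompact in $\mathcal{X}$. Then $F(S)=F(S')$ for all $S,S'\in\widehat{\mathcal{W}}\cup\widehat{\mathcal{A}}$.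
   Context: Forward orbit of $\xi$: $\{f^k(\xi)\mid k\in\mathbb{N}\}$; backward orbit: $\{f^{-k}(\xi)\mid k\in\mathbb{N}\}$. A set is precompact in $\mathcal{X}$ if its closure in $\mathcal{X}$ is compact; a trajectory is forward (backward) precompact if its forward (backward) orbit is precompact. $\omega_{\mathcal{X}}(\xi)$ is the set of $x\in\mathcal{X}$ with $f^{k_j}(\xi)\to x$ for some $k_j\to\infty$; $\alpha_{\mathcal{X}}(\xi)$ likewise with $f^{-k_j}$. $\mathcal{W}=\{\omega_{\mathcal{X}}(\xi)\mid\xi\in\mathcal{X}\}$, $\mathcal{A}=\{\alpha_{\mathcal{X}}(\xi)\mid\xi\in\mathcal{X}\}$, $D^+_{\mathcal{X}}(\Omega)=\{\xi\in\mathcal{X}\mid\omega_{\mathcal{X}}(\xi)=\Omega\}$, $D^-_{\mathcal{X}}(\Gamma)=\{\xi\in\mathcal{X}\mid\alpha_{\mathcal{X}}(\xi)=\Gamma\}$. A system has closed basins if the domain of attraction of each of its $\omega$-limit sets is closed (for a time reversal: each domain of repulsion of each $\alpha$-limit set of the original system is closed). Same notions on $\mathcal{Z}$ for $g$. *)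

theory Defs
  imports "HOL-Analysis.Analysis"
begin

definition separable_space :: "'a::metric_space itself \<Rightarrow> bool" where
  "separable_space _ \<longleftrightarrow> (\<exists>D::'a set. countable D \<and> closure D = UNIV)"

definition homeomorphism_self :: "('a::metric_space \<Rightarrow> 'a) \<Rightarrow> bool" where
  "homeomorphism_self f \<longleftrightarrow> bij f \<and> continuous_on UNIV f \<and> continuous_on UNIV (inv f)"

definition fwd_orbit :: "('a \<Rightarrow> 'a) \<Rightarrow> 'a \<Rightarrow> 'a set" where
  "fwd_orbit f \<xi> = range (\<lambda>k. (f ^^ k) \<xi>)"

definition bwd_orbit :: "('a \<Rightarrow> 'a) \<Rightarrow> 'a \<Rightarrow> 'a set" where
  "bwd_orbit f \<xi> = range (\<lambda>k. (inv f ^^ k) \<xi>)"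

definition precompact_in :: "'a::metric_space set \<Rightarrow> 'a set \<Rightarrow> bool" where
  "precompact_in X S \<longleftrightarrow> S \<subseteq> X \<and> compact (X \<inter> closure S)"

definition omega_lim :: "'a::metric_space set \<Rightarrow> ('a \<Rightarrow> 'a) \<Rightarrow> 'a \<Rightarrow> 'a set" where
  "omega_lim X f \<xi> = {x \<in> X. \<exists>k::nat \<Rightarrow> nat. filterlim k at_top sequentially \<and>
       (\<lambda>j. (f ^^ k j) \<xi>) \<longlonglongrightarrow> x}"

definition alpha_lim :: "'a::metric_space set \<Rightarrow> ('a \<Rightarrow> 'a) \<Rightarrow> 'a \<Rightarrow> 'a set" where
  "alpha_lim X f \<xi> = {x \<in> X. \<exists>k::nat \<Rightarrow> nat. filterlim k at_top sequentially \<and>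
       (\<lambda>j. (inv f ^^ k j) \<xi>) \<longlonglongrightarrow> x}"

definition omega_sets :: "'a::metric_space set \<Rightarrow> ('a \<Rightarrow> 'a) \<Rightarrow> 'a set set" where
  "omega_sets X f = (omega_lim X f) ` X"

definition alpha_sets :: "'a::metric_space set \<Rightarrow> ('a \<Rightarrow> 'a) \<Rightarrow> 'a set set" where
  "alpha_sets X f = (alpha_lim X f) ` X"

definition dom_attr :: "'a::metric_space set \<Rightarrow> ('a \<Rightarrow> 'a) \<Rightarrow> 'a set \<Rightarrow> 'a set" where
  "dom_attr X f \<Omega> = {\<xi> \<in> X. omega_lim X f \<xi> = \<Omega>}"

definition dom_rep :: "'a::metric_space set \<Rightarrow> ('a \<Rightarrow> 'a) \<Rightarrow> 'a set \<Rightarrow> 'a set" where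
  "dom_rep X f \<Gamma> = {\<xi> \<in> X. alpha_lim X f \<xi> = \<Gamma>}"

definition closed_basins :: "'a::metric_space set \<Rightarrow> ('a \<Rightarrow> 'a) \<Rightarrow> bool" where
  "closed_basins X f \<longleftrightarrow> (\<forall>\<Omega> \<in> omega_sets X f. closedin (top_of_set X) (dom_attr X f \<Omega>))"

definition closed_basins_rev :: "'a::metric_space set \<Rightarrow> ('a \<Rightarrow> 'a) \<Rightarrow> bool" where
  "closed_basins_rev X f \<longleftrightarrow> (\<forall>\<Gamma> \<in> alpha_sets X f. closedin (top_of_set X) (dom_rep X f \<Gamma>))"

definition W_hat :: "'a::metric_space set \<Rightarrow> ('a \<Rightarrow> 'a) \<Rightarrow> 'a set set" where
  "W_hat X f = {\<Omega> \<in> omega_sets X f. \<exists>\<xi> \<in> dom_attr X f \<Omega>. precompact_in X (fwd_orbit f \<xi>)}"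

definition A_hat :: "'a::metric_space set \<Rightarrow> ('a \<Rightarrow> 'a) \<Rightarrow> 'a set set" where
  "A_hat X f = {\<Gamma> \<in> alpha_sets X f. \<exists>\<xi> \<in> dom_rep X f \<Gamma>. precompact_in X (bwd_orbit f \<xi>)}"

end

theory Submission
  imports Defs
begin

(*
  If the forward orbit of \<xi> is precompact in X, then \<Omega> = \<omega>(\<xi>) is nonempty, compact and
  invariant under f and f\<^sup>-\<^sup>1, and by continuity and compactness F maps it onto the
  \<omega>-limit set of F \<xi> under g. For y \<in> \<Omega> both limit sets of F y under g lie in F \<Omega>, so
  F \<Omega> "has a trapped point"; the same holds for images of \<alpha>-limit sets of backward
  precompact points. If two trapped sets are the \<omega>- and the \<alpha>-limit set of the same point
  z of Z, closedness of the basins forces them to be equal. Hence along a path in X the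
  preimages of the basins of the countably many trapped image sets form a countable
  partition of [0,1] into disjoint closed sets, which by Sierpinski's theorem is trivial.
*)

lemma alpha_lim_eq_omega_lim_inv: "alpha_lim X p = omega_lim X (inv p)"
  by (rule ext) (simp add: alpha_lim_def omega_lim_def)

lemma bwd_orbit_eq_fwd_orbit_inv: "bwd_orbit p = fwd_orbit (inv p)"
  by (rule ext) (simp add: bwd_orbit_def fwd_orbit_def)

lemma funpow_in_fwd_orbit [simp]: "(p ^^ n) \<xi> \<in> fwd_orbit p \<xi>"
  by (simp add: fwd_orbit_def)

lemma homeomorphism_self_inv:
  assumes "homeomorphism_self p"
  shows "homeomorphism_self (inv p)"
  using assms bij_imp_bij_inv inv_inv_eq unfolding homeomorphism_self_def by metis

lemma fwd_orbit_subset_invariant: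
  assumes "r ` A \<subseteq> A" and "y \<in> A"
  shows "fwd_orbit r y \<subseteq> A"
proof -
  have "(r ^^ n) y \<in> A" for n
    by (induction n) (use assms in auto)
  then show ?thesis
    unfolding fwd_orbit_def by blast
qed

lemma precompact_in_iff: "precompact_in X S \<longleftrightarrow> compact (closure S) \<and> closure S \<subseteq> X"
proof
  assume S: "precompact_in X S"
  then have "closure S \<subseteq> X \<inter> closure S"
    unfolding precompact_in_def
    by (meson closure_minimal closure_subset compact_imp_closed le_inf_iff order_refl)
  then show "compact (closure S) \<and> closure S \<subseteq> X"
    using S unfolding precompact_in_def by (metis inf.absorb_iff2 le_inf_iff)
next
  assume "compact (closure S) \<and> closure S \<subseteq> X"
  then show "precompact_in X S"
    unfolding precompact_in_def using closure_subset by (metis inf.absorb2 order_trans)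
qed

lemma precompact_in_subset:
  assumes "precompact_in X S" and "T \<subseteq> closure S"
  shows "precompact_in X T"
  using assms closure_minimal[OF assms(2) closed_closure] compact_Int_closed[of "closure S" "closure T"]
  unfolding precompact_in_iff by (metis closed_closure inf.absorb_iff2 order_trans)

lemma omega_lim_iff:
  "y \<in> omega_lim X p \<xi> \<longleftrightarrow> y \<in> X \<and> (\<forall>e>0. \<forall>N. \<exists>n\<ge>N. dist ((p ^^ n) \<xi>) y < e)"
proof
  assume "y \<in> omega_lim X p \<xi>"
  then obtain k where y: "y \<in> X" and k: "filterlim k at_top sequentially"
    and lim: "(\<lambda>j. (p ^^ k j) \<xi>) \<longlonglongrightarrow> y"
    unfolding omega_lim_def by blast
  have "\<exists>n\<ge>N. dist ((p ^^ n) \<xi>) y < e" if "e > 0" for e N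
  proof -
    have "\<forall>\<^sub>F j in sequentially. dist ((p ^^ k j) \<xi>) y < e \<and> N \<le> k j"
      using tendstoD[OF lim that] k filterlim_at_top eventually_conj by blast
    then show ?thesis
      unfolding eventually_sequentially by blast
  qed
  with y show "y \<in> X \<and> (\<forall>e>0. \<forall>N. \<exists>n\<ge>N. dist ((p ^^ n) \<xi>) y < e)"
    by blast
next
  assume y: "y \<in> X \<and> (\<forall>e>0. \<forall>N. \<exists>n\<ge>N. dist ((p ^^ n) \<xi>) y < e)"
  then have "\<forall>j. \<exists>n\<ge>j. dist ((p ^^ n) \<xi>) y < inverse (real (Suc j))"
    by simp
  then obtain k where k: "\<And>j. k j \<ge> j \<and> dist ((p ^^ k j) \<xi>) y < inverse (real (Suc j))"
    by metis
  have "filterlim k at_top sequentially"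
    unfolding filterlim_at_top eventually_sequentially using k le_trans by blast
  moreover have "(\<lambda>j. (p ^^ k j) \<xi>) \<longlonglongrightarrow> y"
  proof (rule metric_LIMSEQ_I)
    fix r :: real
    assume "r > 0"
    then obtain N where N: "inverse (real (Suc N)) < r"
      using reals_Archimedean by blast
    have "dist ((p ^^ k n) \<xi>) y < r" if "n \<ge> N" for n
    proof -
      have "inverse (real (Suc n)) \<le> inverse (real (Suc N))"
        using that by (simp add: le_imp_inverse_le)
      then show ?thesis
        using k[of n] N by linarith
    qed
    then show "\<exists>N. \<forall>n\<ge>N. dist ((p ^^ k n) \<xi>) y < r"
      by blast
  qed
  ultimately show "y \<in> omega_lim X p \<xi>"
    unfolding omega_lim_def using y by blast
qed

lemma omega_lim_subset_closure: "omega_lim X p \<xi> \<subseteq> closure (fwd_orbit p \<xi>)"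
proof
  fix y
  assume "y \<in> omega_lim X p \<xi>"
  then have "\<forall>e>0. \<exists>n. dist ((p ^^ n) \<xi>) y < e"
    unfolding omega_lim_iff by blast
  then show "y \<in> closure (fwd_orbit p \<xi>)"
    unfolding closure_approachable fwd_orbit_def by blast
qed

lemma omega_lim_relatively_closed: "X \<inter> closure (omega_lim X p \<xi>) \<subseteq> omega_lim X p \<xi>"
proof
  fix y
  assume y: "y \<in> X \<inter> closure (omega_lim X p \<xi>)"
  have "\<exists>n\<ge>N. dist ((p ^^ n) \<xi>) y < e" if "e > 0" for e N
  proof -
    have "y \<in> closure (omega_lim X p \<xi>)"
      using y by blast
    then obtain u where u: "u \<in> omega_lim X p \<xi>" "dist u y < e/2"
      using \<open>e > 0\<close> unfolding closure_approachable by (meson half_gt_zero)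
    then obtain n where "n \<ge> N" "dist ((p ^^ n) \<xi>) u < e/2"
      using \<open>e > 0\<close> unfolding omega_lim_iff by (meson half_gt_zero)
    with u show ?thesis
      by (metis dist_triangle_half_l dist_commute)
  qed
  with y show "y \<in> omega_lim X p \<xi>"
    unfolding omega_lim_iff by blast
qed

lemma omega_lim_subset:
  assumes "fwd_orbit r y \<subseteq> omega_lim X p \<xi>"
  shows "omega_lim X r y \<subseteq> omega_lim X p \<xi>"
proof -
  have "omega_lim X r y \<subseteq> X \<inter> closure (omega_lim X p \<xi>)"
    using omega_lim_subset_closure closure_mono[OF assms] unfolding omega_lim_def by blast
  then show ?thesis
    using omega_lim_relatively_closed by blast
qed

lemma omega_lim_funpow: "omega_lim X p ((p ^^ n) \<xi>) = omega_lim X p \<xi>"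
proof -
  have shift: "(p ^^ m) ((p ^^ n) \<xi>) = (p ^^ (m + n)) \<xi>" for m
    by (simp add: funpow_add)
  have "(\<exists>m\<ge>N. dist ((p ^^ (m + n)) \<xi>) y < e) \<longleftrightarrow> (\<exists>m\<ge>N + n. dist ((p ^^ m) \<xi>) y < e)"
    for N y e
    by (metis add_le_cancel_right le_add_diff_inverse2 le_add2 le_trans)
  then have "(\<forall>N. \<exists>m\<ge>N. dist ((p ^^ (m + n)) \<xi>) y < e) \<longleftrightarrow> (\<forall>N. \<exists>m\<ge>N. dist ((p ^^ m) \<xi>) y < e)"
    for y e
    by (meson le_add1 le_trans)
  then show ?thesis
    unfolding set_eq_iff omega_lim_iff shift by blast
qed

lemma omega_lim_inv_funpow:
  assumes "bij p"
  shows "omega_lim X p ((inv p ^^ n) \<xi>) = omega_lim X p \<xi>"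
  using omega_lim_funpow[of X p n "(inv p ^^ n) \<xi>"] fn_o_inv_fn_is_id[OF assms, of n]
  by (metis comp_apply)

lemma omega_lim_eq_Int: "omega_lim X p \<xi> = X \<inter> omega_lim UNIV p \<xi>"
  by (auto simp: omega_lim_def)

lemma omega_lim_eq_UNIV:
  assumes "precompact_in X (fwd_orbit p \<xi>)"
  shows "omega_lim X p \<xi> = omega_lim UNIV p \<xi>"
  using assms omega_lim_subset_closure[of UNIV p \<xi>] omega_lim_eq_Int[of X p \<xi>]
  unfolding precompact_in_iff by blast

lemma omega_lim_nonempty:
  assumes "precompact_in X (fwd_orbit p \<xi>)"
  shows "omega_lim X p \<xi> \<noteq> {}"
proof -
  have K: "compact (closure (fwd_orbit p \<xi>))" and KX: "closure (fwd_orbit p \<xi>) \<subseteq> X"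
    using assms unfolding precompact_in_iff by auto
  have "\<forall>n. (p ^^ n) \<xi> \<in> closure (fwd_orbit p \<xi>)"
    by (meson closure_subset funpow_in_fwd_orbit subsetD)
  from seq_compactE[OF compact_imp_seq_compact[OF K] this]
  obtain l r where "l \<in> closure (fwd_orbit p \<xi>)" "strict_mono r"
    "(\<lambda>j. (p ^^ r j) \<xi>) \<longlonglongrightarrow> l"
    unfolding comp_def .
  then have "l \<in> omega_lim X p \<xi>"
    unfolding omega_lim_def using KX filterlim_subseq by blast
  then show ?thesis
    by blast
qed

lemma omega_lim_shift_map:
  assumes "continuous_on UNIV r"
    and "\<And>n. r ((p ^^ (n + d)) \<xi>) = (p ^^ (n + e)) \<xi>"
    and "y \<in> omega_lim UNIV p \<xi>"
  shows "r y \<in> omega_lim UNIV p \<xi>"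
  unfolding omega_lim_iff
proof (intro conjI allI impI UNIV_I)
  fix \<epsilon> :: real and N
  assume "\<epsilon> > 0"
  then obtain \<delta> where "\<delta> > 0" and \<delta>: "\<And>x. dist x y < \<delta> \<Longrightarrow> dist (r x) (r y) < \<epsilon>"
    using assms(1) unfolding continuous_on_iff by blast
  then obtain n where n: "n \<ge> N + d" "dist ((p ^^ n) \<xi>) y < \<delta>"
    using assms(3) unfolding omega_lim_iff by blast
  have "r ((p ^^ n) \<xi>) = (p ^^ (n - d + e)) \<xi>"
    using assms(2)[of "n - d"] n(1) by simp
  then have "dist ((p ^^ (n - d + e)) \<xi>) (r y) < \<epsilon>"
    using \<delta>[OF n(2)] by simp
  moreover have "n - d + e \<ge> N"
    using n(1) by simp
  ultimately show "\<exists>m\<ge>N. dist ((p ^^ m) \<xi>) (r y) < \<epsilon>"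
    by blast
qed

lemma omega_lim_invariant:
  assumes "homeomorphism_self p"
  shows "p ` omega_lim UNIV p \<xi> \<subseteq> omega_lim UNIV p \<xi>"
    and "inv p ` omega_lim UNIV p \<xi> \<subseteq> omega_lim UNIV p \<xi>"
proof -
  have cont: "continuous_on UNIV p" "continuous_on UNIV (inv p)" and bij: "bij p"
    using assms unfolding homeomorphism_self_def by auto
  have "p ((p ^^ (n + 0)) \<xi>) = (p ^^ (n + 1)) \<xi>" for n
    by simp
  from omega_lim_shift_map[OF cont(1) this]
  show "p ` omega_lim UNIV p \<xi> \<subseteq> omega_lim UNIV p \<xi>"
    by blast
  have "inv p ((p ^^ (n + 1)) \<xi>) = (p ^^ (n + 0)) \<xi>" for n
    by (simp add: bij bij_is_inj)
  from omega_lim_shift_map[OF cont(2) this]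
  show "inv p ` omega_lim UNIV p \<xi> \<subseteq> omega_lim UNIV p \<xi>"
    by blast
qed

lemma funpow_semiconj:
  assumes "\<And>x. x \<in> X \<Longrightarrow> p x \<in> X \<Longrightarrow> F (p x) = q (F x)"
    and "fwd_orbit p \<xi> \<subseteq> X"
  shows "F ((p ^^ n) \<xi>) = (q ^^ n) (F \<xi>)"
proof (induction n)
  case (Suc n)
  have "(p ^^ n) \<xi> \<in> X" and "(p ^^ Suc n) \<xi> \<in> X"
    using assms(2) by (meson funpow_in_fwd_orbit subsetD)+
  with Suc show ?case
    using assms(1) by simp
qed simp

lemma semiconj_inv:
  assumes "bij p" "bij q"
    and "\<And>x. x \<in> X \<Longrightarrow> p x \<in> X \<Longrightarrow> F (p x) = q (F x)"
    and "x \<in> X" "inv p x \<in> X"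
  shows "F (inv p x) = inv q (F x)"
proof -
  have "F x = q (F (inv p x))"
    using assms(3)[of "inv p x"] assms(4,5) by (simp add: assms(1) bij_is_surj surj_f_inv_f)
  then show ?thesis
    by (simp add: assms(2) bij_is_inj)
qed

lemma image_omega_lim_semiconj:
  fixes F :: "'a::metric_space \<Rightarrow> 'b::metric_space"
  assumes F: "continuous_on X F"
    and semiconj: "\<And>x. x \<in> X \<Longrightarrow> p x \<in> X \<Longrightarrow> F (p x) = q (F x)"
    and pc: "precompact_in X (fwd_orbit p \<xi>)"
  shows "omega_lim UNIV q (F \<xi>) = F ` omega_lim X p \<xi>"
proof
  have K: "compact (closure (fwd_orbit p \<xi>))" and KX: "closure (fwd_orbit p \<xi>) \<subseteq> X"
    using pc unfolding precompact_in_iff by auto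
  have orbit: "(p ^^ n) \<xi> \<in> closure (fwd_orbit p \<xi>)" for n
    by (meson closure_subset funpow_in_fwd_orbit subsetD)
  have "fwd_orbit p \<xi> \<subseteq> X"
    using pc unfolding precompact_in_def by blast
  from funpow_semiconj[of X p F q, OF semiconj this]
  have iter: "(q ^^ n) (F \<xi>) = F ((p ^^ n) \<xi>)" for n
    by (rule sym)
  have F_lim: "(\<lambda>j. (q ^^ k j) (F \<xi>)) \<longlonglongrightarrow> F x"
    if "x \<in> closure (fwd_orbit p \<xi>)" "(\<lambda>j. (p ^^ k j) \<xi>) \<longlonglongrightarrow> x" for x k
  proof -
    have "\<forall>\<^sub>F j in sequentially. (p ^^ k j) \<xi> \<in> X"
      using KX orbit by (intro always_eventually) blast
    then show ?thesis
      unfolding iter using continuous_on_tendsto_compose[OF F that(2)] that(1) KX by (meson subsetD)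
  qed
  show "F ` omega_lim X p \<xi> \<subseteq> omega_lim UNIV q (F \<xi>)"
  proof
    fix z
    assume "z \<in> F ` omega_lim X p \<xi>"
    then obtain x k where x: "x \<in> omega_lim X p \<xi>" "z = F x"
      and k: "filterlim k at_top sequentially" "(\<lambda>j. (p ^^ k j) \<xi>) \<longlonglongrightarrow> x"
      unfolding omega_lim_def by blast
    have "(\<lambda>j. (q ^^ k j) (F \<xi>)) \<longlonglongrightarrow> z"
      using F_lim[OF _ k(2)] x omega_lim_subset_closure by blast
    with k(1) show "z \<in> omega_lim UNIV q (F \<xi>)"
      unfolding omega_lim_def by blast
  qed
  show "omega_lim UNIV q (F \<xi>) \<subseteq> F ` omega_lim X p \<xi>"
  proof
    fix z
    assume "z \<in> omega_lim UNIV q (F \<xi>)"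
    then obtain k where k: "filterlim k at_top sequentially" "(\<lambda>j. (q ^^ k j) (F \<xi>)) \<longlonglongrightarrow> z"
      unfolding omega_lim_def by blast
    have "\<forall>j. (p ^^ k j) \<xi> \<in> closure (fwd_orbit p \<xi>)"
      using orbit by blast
    from seq_compactE[OF compact_imp_seq_compact[OF K] this]
    obtain l r where l: "l \<in> closure (fwd_orbit p \<xi>)" "strict_mono r"
      "(\<lambda>j. (p ^^ k (r j)) \<xi>) \<longlonglongrightarrow> l"
      unfolding comp_def .
    have "(\<lambda>j. (q ^^ k (r j)) (F \<xi>)) \<longlonglongrightarrow> z"
      using LIMSEQ_subseq_LIMSEQ[OF k(2) l(2)] by (simp add: comp_def)
    then have "z = F l"
      using F_lim[OF l(1,3)] LIMSEQ_unique by blast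
    moreover have "filterlim (\<lambda>j. k (r j)) at_top sequentially"
      using filterlim_compose[OF k(1) filterlim_subseq[OF l(2)]] by simp
    then have "l \<in> omega_lim X p \<xi>"
      unfolding omega_lim_def using l KX by blast
    ultimately show "z \<in> F ` omega_lim X p \<xi>"
      by blast
  qed
qed

definition has_trapped_point :: "('a::metric_space \<Rightarrow> 'a) \<Rightarrow> 'a set \<Rightarrow> bool" where
  "has_trapped_point q V \<longleftrightarrow> (\<exists>u\<in>V. omega_lim UNIV q u \<subseteq> V \<and> alpha_lim UNIV q u \<subseteq> V)"

lemma has_trapped_point_inv:
  assumes "bij q"
  shows "has_trapped_point (inv q) V \<longleftrightarrow> has_trapped_point q V"
  unfolding has_trapped_point_def alpha_lim_eq_omega_lim_inv inv_inv_eq[OF assms] by blast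

lemma has_trapped_point_omega_lim:
  fixes F :: "'a::metric_space \<Rightarrow> 'b::metric_space"
  assumes hom: "homeomorphism_self p" and "bij q"
    and F: "continuous_on X F"
    and semiconj: "\<And>x. x \<in> X \<Longrightarrow> p x \<in> X \<Longrightarrow> F (p x) = q (F x)"
    and pc: "precompact_in X (fwd_orbit p \<xi>)"
  shows "has_trapped_point q (omega_lim UNIV q (F \<xi>))"
proof -
  define \<Omega> where "\<Omega> = omega_lim X p \<xi>"
  have \<Omega>_eq: "omega_lim UNIV q (F \<xi>) = F ` \<Omega>"
    unfolding \<Omega>_def using image_omega_lim_semiconj[OF F semiconj pc] .
  obtain y where y: "y \<in> \<Omega>"
    using omega_lim_nonempty[OF pc] unfolding \<Omega>_def by blast
  have "\<Omega> = omega_lim UNIV p \<xi>"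
    unfolding \<Omega>_def using omega_lim_eq_UNIV[OF pc] .
  then have orbits: "fwd_orbit p y \<subseteq> \<Omega>" "fwd_orbit (inv p) y \<subseteq> \<Omega>"
    using fwd_orbit_subset_invariant[OF _ y] omega_lim_invariant[OF hom] by simp_all
  have pc_orbits: "precompact_in X (fwd_orbit p y)" "precompact_in X (fwd_orbit (inv p) y)"
    using orbits precompact_in_subset[OF pc] omega_lim_subset_closure unfolding \<Omega>_def
    by (meson order_trans)+
  have bij_p: "bij p"
    using hom unfolding homeomorphism_self_def by blast
  have semiconj_inv': "F (inv p x) = inv q (F x)" if "x \<in> X" "inv p x \<in> X" for x
    using semiconj_inv[of p q X F, OF bij_p \<open>bij q\<close> semiconj that] .
  have "omega_lim UNIV q (F y) = F ` omega_lim X p y"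
    using image_omega_lim_semiconj[OF F semiconj pc_orbits(1)] .
  also have "\<dots> \<subseteq> F ` \<Omega>"
    using omega_lim_subset[OF orbits(1)[unfolded \<Omega>_def]] unfolding \<Omega>_def by blast
  finally have "omega_lim UNIV q (F y) \<subseteq> F ` \<Omega>" .
  moreover have "alpha_lim UNIV q (F y) = F ` omega_lim X (inv p) y"
    unfolding alpha_lim_eq_omega_lim_inv
    using image_omega_lim_semiconj[OF F semiconj_inv' pc_orbits(2)] .
  moreover have "\<dots> \<subseteq> F ` \<Omega>"
    using omega_lim_subset[OF orbits(2)[unfolded \<Omega>_def]] unfolding \<Omega>_def by blast
  ultimately show ?thesis
    unfolding has_trapped_point_def \<Omega>_eq using y by blast
qed

lemma image_alpha_lim_semiconj:
  fixes F :: "'a::metric_space \<Rightarrow> 'b::metric_space"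
  assumes "bij p" "bij q"
    and F: "continuous_on X F"
    and semiconj: "\<And>x. x \<in> X \<Longrightarrow> p x \<in> X \<Longrightarrow> F (p x) = q (F x)"
    and pc: "precompact_in X (bwd_orbit p \<xi>)"
  shows "alpha_lim UNIV q (F \<xi>) = F ` alpha_lim X p \<xi>"
proof -
  have "F (inv p x) = inv q (F x)" if "x \<in> X" "inv p x \<in> X" for x
    using semiconj_inv[of p q X F, OF assms(1,2) semiconj that] .
  from image_omega_lim_semiconj[where p="inv p" and q="inv q", OF F this] pc show ?thesis
    unfolding alpha_lim_eq_omega_lim_inv bwd_orbit_eq_fwd_orbit_inv by blast
qed

lemma has_trapped_point_alpha_lim:
  fixes F :: "'a::metric_space \<Rightarrow> 'b::metric_space"
  assumes hom: "homeomorphism_self p" and "bij q"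
    and F: "continuous_on X F"
    and semiconj: "\<And>x. x \<in> X \<Longrightarrow> p x \<in> X \<Longrightarrow> F (p x) = q (F x)"
    and pc: "precompact_in X (bwd_orbit p \<xi>)"
  shows "has_trapped_point q (alpha_lim UNIV q (F \<xi>))"
proof -
  have "bij p"
    using hom unfolding homeomorphism_self_def by blast
  have "F (inv p x) = inv q (F x)" if "x \<in> X" "inv p x \<in> X" for x
    using semiconj_inv[of p q X F, OF \<open>bij p\<close> \<open>bij q\<close> semiconj that] .
  from has_trapped_point_omega_lim[where p="inv p" and q="inv q",
      OF homeomorphism_self_inv[OF hom] bij_imp_bij_inv[OF \<open>bij q\<close>] F this] pc
  show ?thesis
    unfolding alpha_lim_eq_omega_lim_inv bwd_orbit_eq_fwd_orbit_inv has_trapped_point_inv[OF \<open>bij q\<close>]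
    by blast
qed

lemma closed_basins_imp_closed:
  assumes "closed_basins UNIV q"
  shows "closed {z. omega_lim UNIV q z = V}"
proof (cases "V \<in> omega_sets UNIV q")
  case True
  then show ?thesis
    using assms unfolding closed_basins_def dom_attr_def closed_closedin by simp
next
  case False
  then have "{z. omega_lim UNIV q z = V} = {}"
    unfolding omega_sets_def by auto
  then show ?thesis
    by simp
qed

lemma closed_basins_rev_imp_closed:
  assumes "closed_basins_rev UNIV q"
  shows "closed {z. alpha_lim UNIV q z = V}"
proof (cases "V \<in> alpha_sets UNIV q")
  case True
  then show ?thesis
    using assms unfolding closed_basins_rev_def dom_rep_def closed_closedin by simp
next
  case False
  then have "{z. alpha_lim UNIV q z = V} = {}"
    unfolding alpha_sets_def by auto
  then show ?thesis
    by simp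
qed

(* The backward orbit of z lies in the closed basin of \<omega>(z), hence so does its limit point u. *)
lemma omega_lim_subset_alpha_lim:
  assumes "bij q" and closed: "closed {x. omega_lim UNIV q x = omega_lim UNIV q z}"
    and u: "u \<in> alpha_lim UNIV q z" "omega_lim UNIV q u \<subseteq> alpha_lim UNIV q z"
  shows "omega_lim UNIV q z \<subseteq> alpha_lim UNIV q z"
proof -
  have "fwd_orbit (inv q) z \<subseteq> {x. omega_lim UNIV q x = omega_lim UNIV q z}"
    unfolding fwd_orbit_def using omega_lim_inv_funpow[OF \<open>bij q\<close>] by auto
  then have "closure (fwd_orbit (inv q) z) \<subseteq> {x. omega_lim UNIV q x = omega_lim UNIV q z}"
    using closure_minimal closed by blast
  moreover have "u \<in> closure (fwd_orbit (inv q) z)"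
    using u(1) omega_lim_subset_closure unfolding alpha_lim_eq_omega_lim_inv by blast
  ultimately show ?thesis
    using u(2) by blast
qed

lemma trapped_omega_lim_eq_alpha_lim:
  assumes "bij q" "closed_basins UNIV q" "closed_basins_rev UNIV q"
    and "has_trapped_point q (omega_lim UNIV q z)" "has_trapped_point q (alpha_lim UNIV q z)"
  shows "omega_lim UNIV q z = alpha_lim UNIV q z"
proof
  show "omega_lim UNIV q z \<subseteq> alpha_lim UNIV q z"
    using omega_lim_subset_alpha_lim[OF \<open>bij q\<close> closed_basins_imp_closed[OF assms(2)]] assms(5)
    unfolding has_trapped_point_def by blast
  have inv_q: "bij (inv q)" "omega_lim UNIV (inv q) = alpha_lim UNIV q"
    "alpha_lim UNIV (inv q) = omega_lim UNIV q"
    using \<open>bij q\<close> bij_imp_bij_inv inv_inv_eq unfolding alpha_lim_eq_omega_lim_inv by metis+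
  show "alpha_lim UNIV q z \<subseteq> omega_lim UNIV q z"
    using omega_lim_subset_alpha_lim[OF inv_q(1), of z] closed_basins_rev_imp_closed[OF assms(3)] assms(4)
    unfolding inv_q(2,3) has_trapped_point_def by blast
qed

lemma path_connected_countable_closed_partition:
  assumes "path_connected S" "countable \<U>" "pairwise disjnt \<U>"
    and closed: "\<And>A. A \<in> \<U> \<Longrightarrow> closedin (top_of_set S) A" and "\<Union>\<U> = S"
    and "A \<in> \<U>" "A \<noteq> {}"
  shows "A = S"
proof (rule ccontr)
  assume "A \<noteq> S"
  then obtain a x where "a \<in> A" "x \<in> S - A"
    using assms(5-7) by blast
  then obtain \<gamma> where \<gamma>: "path \<gamma>" "path_image \<gamma> \<subseteq> S" "pathstart \<gamma> = a" "pathfinish \<gamma> = x"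
    using assms(1,5,6) unfolding path_connected_def by blast
  define P where "P B = {0..1} \<inter> \<gamma> -` B" for B
  have "P ` \<U> - {{}} = {{0..1}}"
  proof (rule real_Sierpinski_lemma)
    show "countable (P ` \<U> - {{}})"
      using \<open>countable \<U>\<close> by simp
    have "disjnt (P B) (P B')" if "B \<in> \<U>" "B' \<in> \<U>" "P B \<noteq> P B'" for B B'
      using that \<open>pairwise disjnt \<U>\<close> unfolding P_def pairwise_def disjnt_def by blast
    then show "pairwise disjnt (P ` \<U> - {{}})"
      unfolding pairwise_def by blast
    have "t \<in> \<Union>(P ` \<U>)" if "t \<in> {0..1}" for t
    proof -
      have "\<gamma> t \<in> \<Union>\<U>"
        using \<gamma>(2) that \<open>\<Union>\<U> = S\<close> unfolding path_image_def by blast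
      then show ?thesis
        using that unfolding P_def by blast
    qed
    moreover have "\<Union>(P ` \<U>) \<subseteq> {0..1}"
      unfolding P_def by blast
    ultimately show "\<Union>(P ` \<U> - {{}}) = {0..1}"
      by blast
    fix C
    assume "C \<in> P ` \<U> - {{}}"
    then obtain B where "B \<in> \<U>" "C = P B" "C \<noteq> {}"
      by blast
    moreover have "closedin (top_of_set {0..1}) (P B)"
      unfolding P_def
      using continuous_closedin_preimage_gen[of "{0..1}" \<gamma> S B] \<gamma>(1,2) closed[OF \<open>B \<in> \<U>\<close>]
      unfolding path_def path_image_def by blast
    ultimately show "closed C \<and> C \<noteq> {}"
      using closedin_closed_trans by blast
  qed simp
  moreover have "0 \<in> P A"
    using \<gamma>(3) \<open>a \<in> A\<close> unfolding P_def pathstart_def by simp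
  ultimately have "P A = {0..1}"
    using \<open>A \<in> \<U>\<close> by blast
  then have "1 \<in> P A"
    by simp
  then show False
    using \<gamma>(4) \<open>x \<in> S - A\<close> unfolding P_def pathfinish_def by simp
qed

lemma trapped_limit_sets_constant_on_path_connected:
  fixes F :: "'a::topological_space \<Rightarrow> 'b::metric_space"
  assumes "bij g" "closed_basins UNIV g" "closed_basins_rev UNIV g"
    and "path_connected X" and F: "continuous_on X F"
    and "countable \<V>" and trapped: "\<And>V. V \<in> \<V> \<Longrightarrow> has_trapped_point g V"
    and cover: "\<And>x. x \<in> X \<Longrightarrow> omega_lim UNIV g (F x) \<in> \<V> \<or> alpha_lim UNIV g (F x) \<in> \<V>"
    and x: "x \<in> X" "V \<in> \<V>" "V \<in> {omega_lim UNIV g (F x), alpha_lim UNIV g (F x)}"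
    and y: "y \<in> X" "W \<in> \<V>" "W \<in> {omega_lim UNIV g (F y), alpha_lim UNIV g (F y)}"
  shows "V = W"
proof -
  define C where "C V = {x \<in> X. V \<in> {omega_lim UNIV g (F x), alpha_lim UNIV g (F x)}}" for V
  have C_unique: "V = W" if "V \<in> \<V>" "W \<in> \<V>" "x \<in> C V" "x \<in> C W" for V W x
    using trapped_omega_lim_eq_alpha_lim[OF assms(1-3), of "F x"] trapped that
    unfolding C_def by auto
  have "C V = X"
  proof (rule path_connected_countable_closed_partition)
    show "countable (C ` \<V>)"
      using \<open>countable \<V>\<close> by simp
    show "pairwise disjnt (C ` \<V>)"
      using C_unique unfolding pairwise_def disjnt_def by blast
    show "\<Union>(C ` \<V>) = X"
      using cover unfolding C_def by auto
    show "C V \<in> C ` \<V>" "C V \<noteq> {}"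
      using x unfolding C_def by auto
    fix A
    assume "A \<in> C ` \<V>"
    then obtain U where "A = C U"
      by blast
    then have A: "A = X \<inter> F -` ({z. omega_lim UNIV g z = U} \<union> {z. alpha_lim UNIV g z = U})"
      unfolding C_def by blast
    have "closed ({z. omega_lim UNIV g z = U} \<union> {z. alpha_lim UNIV g z = U})"
      using closed_basins_imp_closed[OF assms(2)] closed_basins_rev_imp_closed[OF assms(3)]
      by (rule closed_Un)
    from continuous_closedin_preimage[OF F this]
    show "closedin (top_of_set X) A"
      unfolding A .
  qed fact
  then show ?thesis
    using C_unique x(2) y unfolding C_def by blast
qed

theorem lemma28:
  fixes f :: "'a::metric_space \<Rightarrow> 'a" and X :: "'a set"
    and g :: "'b::metric_space \<Rightarrow> 'b" and F :: "'a \<Rightarrow> 'b"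
  assumes sepM: "separable_space TYPE('a)"
    and homf: "homeomorphism_self f"
    and inv: "f ` X \<subseteq> X"
    and pc: "path_connected X"
    and sepZ: "separable_space TYPE('b)"
    and homg: "homeomorphism_self g"
    and Fcont: "continuous_on X F"
    and conj: "\<And>x. x \<in> X \<Longrightarrow> F (f x) = g (F x)"
    and cbg: "closed_basins UNIV g"
    and cbginv: "closed_basins_rev UNIV g"
    and T2: "\<And>\<xi>. \<xi> \<in> X \<Longrightarrow> precompact_in X (fwd_orbit f \<xi>) \<or> precompact_in X (bwd_orbit f \<xi>)"
    and T3: "countable (omega_sets X f \<union> alpha_sets X f)"
  shows "\<forall>S \<in> W_hat X f \<union> A_hat X f. \<forall>S' \<in> W_hat X f \<union> A_hat X f. F ` S = F ` S'"
proof -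
  have bij_g: "bij g"
    using homg unfolding homeomorphism_self_def by blast
  have semiconj: "F (f x) = g (F x)" if "x \<in> X" "f x \<in> X" for x
    using conj that(1) .
  define \<V> where "\<V> = {V \<in> (\<lambda>S. F ` S) ` (omega_sets X f \<union> alpha_sets X f). has_trapped_point g V}"
  have fwd: "omega_lim UNIV g (F x) = F ` omega_lim X f x \<and> F ` omega_lim X f x \<in> \<V>"
    if "x \<in> X" "precompact_in X (fwd_orbit f x)" for x
    using image_omega_lim_semiconj[OF Fcont semiconj that(2)]
      has_trapped_point_omega_lim[OF homf bij_g Fcont semiconj that(2)] that(1)
    unfolding \<V>_def omega_sets_def by auto
  have bwd: "alpha_lim UNIV g (F x) = F ` alpha_lim X f x \<and> F ` alpha_lim X f x \<in> \<V>"
    if "x \<in> X" "precompact_in X (bwd_orbit f x)" for x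
    using image_alpha_lim_semiconj[OF _ bij_g Fcont semiconj that(2)]
      has_trapped_point_alpha_lim[OF homf bij_g Fcont semiconj that(2)] that(1) homf
    unfolding \<V>_def alpha_sets_def homeomorphism_self_def by auto
  have hat: "\<exists>x\<in>X. F ` S \<in> \<V> \<and> F ` S \<in> {omega_lim UNIV g (F x), alpha_lim UNIV g (F x)}"
    if "S \<in> W_hat X f \<union> A_hat X f" for S
    using that fwd bwd unfolding W_hat_def A_hat_def dom_attr_def dom_rep_def by fastforce
  have countable: "countable \<V>"
    using T3 unfolding \<V>_def by simp
  have trapped: "has_trapped_point g V" if "V \<in> \<V>" for V
    using that unfolding \<V>_def by blast
  have cover: "omega_lim UNIV g (F x) \<in> \<V> \<or> alpha_lim UNIV g (F x) \<in> \<V>" if "x \<in> X" for x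
    using T2[OF that] fwd[OF that] bwd[OF that] by auto
  show ?thesis
  proof (intro ballI)
    fix S S'
    assume "S \<in> W_hat X f \<union> A_hat X f" "S' \<in> W_hat X f \<union> A_hat X f"
    with hat obtain x x' where
      x: "x \<in> X" "F ` S \<in> \<V>" "F ` S \<in> {omega_lim UNIV g (F x), alpha_lim UNIV g (F x)}" and
      x': "x' \<in> X" "F ` S' \<in> \<V>" "F ` S' \<in> {omega_lim UNIV g (F x'), alpha_lim UNIV g (F x')}"
      by meson
    from trapped cover x x' show "F ` S = F ` S'"
      by (rule trapped_limit_sets_constant_on_path_connected[OF bij_g cbg cbginv pc Fcont countable])
  qed
qed

end
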